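(* Let $G$ be a cograph, let $(T,t)$ be an arbitrary binary cotree of $G$, and let $\sigma$ be a greedy coloring of $G$. Then $\sigma$ is an hc-coloring with respect to $(T,t)$.
   Context: All graphs are finite, simple and undirected. A (proper vertex) coloring of $G=(V,E)$ is a surjective map $\sigma:V\to S$ with $\sigma(x)\neq\sigma(y)$ whenever $xy\in E$. A greedy coloring is a coloring $\sigma:V\to S$ for which there exist a linear order on $S$ and an ordering of $V$ such that processing the vertices in that order, each vertex receives the smallest color of $S$ not already assigned to one of its previously processed neighbors. A cograph is a graph that is $K_1$, or a disjoint union of cographs, or a join of cographs. A cotree $(T,t)$ of a cograph $G$ is a rooted tree $T$ with leaf set $V$ and a labeling $t:V^0(T)\to\{0,1\}$ of its inner vertices such that for every inner vertex $u$, $G(u):=G[L(T(u))]$ (with $L(T(u))$ the leaves descending from $u$) is the disjoint union (if $t(u)=0$) or the join (if $t(u)=1$) of the graphs $G(v)$, $v$ a child of $u$. It is binary if every inner vertex has exactly two children. A coloring $\sigma$ is an hc-coloring with respect to a binary cotree $(T,t)$ if for every inner vertex $u$ with children $v_1,v_2$: if $t(u)=1$ then $\sigma(L(T(v_1)))\cap\sigma(L(T(v_2)))=\emptyset$, and if $t(u)=0$ then one of $\sigma(L(T(v_1)))$, $\sigma(L(T(v_2)))$ contains the other. *)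

theory Defs
  imports Main
begin

type_synonym 'a graph = "'a set \<times> 'a set set"

definition simple_graph :: "'a graph \<Rightarrow> bool" where
  "simple_graph G \<longleftrightarrow> finite (fst G) \<and>
     (\<forall>e\<in>snd G. \<exists>x y. x \<noteq> y \<and> x \<in> fst G \<and> y \<in> fst G \<and> e = {x, y})"

definition induced :: "'a graph \<Rightarrow> 'a set \<Rightarrow> 'a graph" where
  "induced G S = (S, {e \<in> snd G. e \<subseteq> S})"

text \<open>Disjoint union and join of two graphs (on disjoint vertex sets).\<close>
definition gunion :: "'a graph \<Rightarrow> 'a graph \<Rightarrow> 'a graph" where
  "gunion G1 G2 = (fst G1 \<union> fst G2, snd G1 \<union> snd G2)"

definition gjoin :: "'a graph \<Rightarrow> 'a graph \<Rightarrow> 'a graph" where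
  "gjoin G1 G2 = (fst G1 \<union> fst G2,
     snd G1 \<union> snd G2 \<union> {{x, y} | x y. x \<in> fst G1 \<and> y \<in> fst G2})"

inductive cograph :: "'a graph \<Rightarrow> bool" where
  K1: "cograph ({v}, {})"
| union: "cograph G1 \<Longrightarrow> cograph G2 \<Longrightarrow> fst G1 \<inter> fst G2 = {} \<Longrightarrow> cograph (gunion G1 G2)"
| join: "cograph G1 \<Longrightarrow> cograph G2 \<Longrightarrow> fst G1 \<inter> fst G2 = {} \<Longrightarrow> cograph (gjoin G1 G2)"

text \<open>Binary rooted trees with leaves labelled by vertices; inner vertices carry the
  label t(u): True means t(u) = 1 (join), False means t(u) = 0 (disjoint union).\<close>
datatype 'a cotree = Leaf 'a | Inner bool "'a cotree" "'a cotree"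

fun leaves :: "'a cotree \<Rightarrow> 'a set" where
  "leaves (Leaf x) = {x}"
| "leaves (Inner b l r) = leaves l \<union> leaves r"

fun cotree_ok :: "'a graph \<Rightarrow> 'a cotree \<Rightarrow> bool" where
  "cotree_ok G (Leaf x) = True"
| "cotree_ok G (Inner b l r) \<longleftrightarrow>
     leaves l \<inter> leaves r = {} \<and>
     induced G (leaves l \<union> leaves r) =
       (if b then gjoin (induced G (leaves l)) (induced G (leaves r))
        else gunion (induced G (leaves l)) (induced G (leaves r))) \<and>
     cotree_ok G l \<and> cotree_ok G r"

definition binary_cotree :: "'a graph \<Rightarrow> 'a cotree \<Rightarrow> bool" where
  "binary_cotree G T \<longleftrightarrow> leaves T = fst G \<and> cotree_ok G T"

text \<open>Proper coloring; the color set is S = sigma ` V (so sigma is surjective onto S).\<close>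
definition proper_coloring :: "'a graph \<Rightarrow> ('a \<Rightarrow> 'c) \<Rightarrow> bool" where
  "proper_coloring G \<sigma> \<longleftrightarrow> (\<forall>x y. {x, y} \<in> snd G \<longrightarrow> \<sigma> x \<noteq> \<sigma> y)"

definition greedy_coloring :: "'a graph \<Rightarrow> ('a \<Rightarrow> 'c) \<Rightarrow> bool" where
  "greedy_coloring G \<sigma> \<longleftrightarrow> proper_coloring G \<sigma> \<and>
     (\<exists>r vs. linear_order_on (\<sigma> ` fst G) r \<and> distinct vs \<and> set vs = fst G \<and>
       (\<forall>i < length vs.
          let used = {\<sigma> (vs ! j) | j. j < i \<and> {vs ! j, vs ! i} \<in> snd G} in
          \<sigma> (vs ! i) \<notin> used \<and>
          (\<forall>s \<in> \<sigma> ` fst G. (s, \<sigma> (vs ! i)) \<in> r \<and> s \<noteq> \<sigma> (vs ! i) \<longrightarrow> s \<in> used)))"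

fun hc_coloring :: "'a cotree \<Rightarrow> ('a \<Rightarrow> 'c) \<Rightarrow> bool" where
  "hc_coloring (Leaf x) \<sigma> = True"
| "hc_coloring (Inner b l r) \<sigma> \<longleftrightarrow>
     (if b then \<sigma> ` leaves l \<inter> \<sigma> ` leaves r = {}
      else (\<sigma> ` leaves l \<subseteq> \<sigma> ` leaves r \<or> \<sigma> ` leaves r \<subseteq> \<sigma> ` leaves l)) \<and>
     hc_coloring l \<sigma> \<and> hc_coloring r \<sigma>"

end

theory Submission
  imports Defs
begin

text \<open>A greedy coloring has the Grundy property: every vertex sees all colors below its own.
  For a disjoint-union node with children A and B, pick x \<in> A and y \<in> B whose colors are
  missing on the other side, say \<sigma> x < \<sigma> y. Then y has a neighbour w of color \<sigma> x; w lies
  neither in A (no edges between A and B) nor in B (\<sigma> x is missing there). Since the leaf set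
  of every cotree node is a module, w is adjacent to x as well, contradicting properness.
  At a join node the two color sets are disjoint simply because the coloring is proper.\<close>

definition sees_smaller_colors :: "'a graph \<Rightarrow> ('a \<Rightarrow> 'c) \<Rightarrow> 'c rel \<Rightarrow> bool" where
  "sees_smaller_colors G \<sigma> r \<longleftrightarrow>
     (\<forall>v \<in> fst G. \<forall>s \<in> \<sigma> ` fst G. (s, \<sigma> v) \<in> r \<and> s \<noteq> \<sigma> v \<longrightarrow>
        (\<exists>w. {w, v} \<in> snd G \<and> \<sigma> w = s))"

definition is_module :: "'a graph \<Rightarrow> 'a set \<Rightarrow> bool" where
  "is_module G M \<longleftrightarrow>
     (\<forall>z \<in> fst G - M. (\<forall>y \<in> M. {z, y} \<in> snd G) \<or> (\<forall>y \<in> M. {z, y} \<notin> snd G))"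

lemma greedy_coloring_sees_smaller_colors:
  assumes "greedy_coloring G \<sigma>"
  obtains r where "linear_order_on (\<sigma> ` fst G) r" "sees_smaller_colors G \<sigma> r"
proof -
  obtain r vs where lin: "linear_order_on (\<sigma> ` fst G) r" and vs: "set vs = fst G"
    and first_fit: "\<forall>i < length vs.
       let used = {\<sigma> (vs ! j) | j. j < i \<and> {vs ! j, vs ! i} \<in> snd G} in
       \<sigma> (vs ! i) \<notin> used \<and>
       (\<forall>s \<in> \<sigma> ` fst G. (s, \<sigma> (vs ! i)) \<in> r \<and> s \<noteq> \<sigma> (vs ! i) \<longrightarrow> s \<in> used)"
    using assms unfolding greedy_coloring_def by auto
  have "sees_smaller_colors G \<sigma> r"
    unfolding sees_smaller_colors_def
  proof (intro ballI impI)
    fix v s assume "v \<in> fst G" "s \<in> \<sigma> ` fst G" "(s, \<sigma> v) \<in> r \<and> s \<noteq> \<sigma> v"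
    moreover obtain i where "i < length vs" "vs ! i = v"
      using \<open>v \<in> fst G\<close> vs by (metis in_set_conv_nth)
    ultimately have "s \<in> {\<sigma> (vs ! j) | j. j < i \<and> {vs ! j, v} \<in> snd G}"
      using first_fit unfolding Let_def by auto
    then show "\<exists>w. {w, v} \<in> snd G \<and> \<sigma> w = s" by auto
  qed
  with lin show thesis by (rule that)
qed

lemma cotree_ok_Inner_edge_iff:
  assumes "cotree_ok G (Inner b l r)" "x \<in> leaves l" "y \<in> leaves r"
  shows "{x, y} \<in> snd G \<longleftrightarrow> b"
proof -
  let ?L = "induced G (leaves l)" and ?R = "induced G (leaves r)"
  have disjoint: "leaves l \<inter> leaves r = {}"
    and split: "induced G (leaves l \<union> leaves r) = (if b then gjoin ?L ?R else gunion ?L ?R)"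
    using assms(1) by simp_all
  have xy: "{x, y} \<subseteq> leaves l \<union> leaves r" "\<not> {x, y} \<subseteq> leaves l" "\<not> {x, y} \<subseteq> leaves r"
    using assms(2,3) disjoint by auto
  show ?thesis
  proof (cases b)
    case True
    have "{x, y} \<in> snd (gjoin ?L ?R)"
      using assms(2,3) unfolding gjoin_def induced_def by auto
    then have "{x, y} \<in> snd (induced G (leaves l \<union> leaves r))"
      using split True by simp
    with True show ?thesis unfolding induced_def by simp
  next
    case False
    have "{x, y} \<notin> snd (gunion ?L ?R)"
      using xy unfolding gunion_def induced_def by auto
    then have "{x, y} \<notin> snd (induced G (leaves l \<union> leaves r))"
      using split False by simp
    with False xy show ?thesis unfolding induced_def by simp
  qed
qed

lemma is_module_subset:
  assumes module: "is_module G M" and "N \<subseteq> M"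
    and inside: "\<And>z. z \<in> M - N \<Longrightarrow> (\<forall>y \<in> N. {z, y} \<in> snd G) \<or> (\<forall>y \<in> N. {z, y} \<notin> snd G)"
  shows "is_module G N"
  unfolding is_module_def
proof
  fix z assume z: "z \<in> fst G - N"
  show "(\<forall>y \<in> N. {z, y} \<in> snd G) \<or> (\<forall>y \<in> N. {z, y} \<notin> snd G)"
  proof (cases "z \<in> M")
    case True
    with z have "z \<in> M - N" by simp
    then show ?thesis by (rule inside)
  next
    case False
    with z module have "(\<forall>y \<in> M. {z, y} \<in> snd G) \<or> (\<forall>y \<in> M. {z, y} \<notin> snd G)"
      unfolding is_module_def by simp
    with \<open>N \<subseteq> M\<close> show ?thesis by blast
  qed
qed

lemma is_module_children:
  assumes ok: "cotree_ok G (Inner b l r)" and module: "is_module G (leaves (Inner b l r))"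
  shows "is_module G (leaves l)" "is_module G (leaves r)"
proof -
  have edge_iff: "{x, y} \<in> snd G \<longleftrightarrow> b" "{y, x} \<in> snd G \<longleftrightarrow> b"
    if "x \<in> leaves l" "y \<in> leaves r" for x y
    using cotree_ok_Inner_edge_iff[OF ok that] by (simp_all add: insert_commute)
  show "is_module G (leaves l)"
  proof (rule is_module_subset[OF module])
    fix z assume "z \<in> leaves (Inner b l r) - leaves l"
    then have "z \<in> leaves r" by auto
    then show "(\<forall>y \<in> leaves l. {z, y} \<in> snd G) \<or> (\<forall>y \<in> leaves l. {z, y} \<notin> snd G)"
      using edge_iff(2) by blast
  qed simp
  show "is_module G (leaves r)"
  proof (rule is_module_subset[OF module])
    fix z assume "z \<in> leaves (Inner b l r) - leaves r"
    then have "z \<in> leaves l" by auto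
    then show "(\<forall>y \<in> leaves r. {z, y} \<in> snd G) \<or> (\<forall>y \<in> leaves r. {z, y} \<notin> snd G)"
      using edge_iff(1) by blast
  qed simp
qed

lemma sees_smaller_color_across:
  assumes proper: "proper_coloring (V, E) \<sigma>" and simple: "simple_graph (V, E)"
    and sees: "sees_smaller_colors (V, E) \<sigma> r"
    and module: "is_module (V, E) (A \<union> B)" and AB: "A \<union> B \<subseteq> V"
    and no_edges: "\<And>a b. a \<in> A \<Longrightarrow> b \<in> B \<Longrightarrow> {a, b} \<notin> E"
    and x: "x \<in> A" and y: "y \<in> B" and below: "(\<sigma> x, \<sigma> y) \<in> r" "\<sigma> x \<noteq> \<sigma> y"
  shows "\<sigma> x \<in> \<sigma> ` B"
proof (rule ccontr)
  assume missing: "\<sigma> x \<notin> \<sigma> ` B"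
  have "y \<in> V" "\<sigma> x \<in> \<sigma> ` V" using AB x y by auto
  with sees have "\<forall>s \<in> \<sigma> ` V. (s, \<sigma> y) \<in> r \<and> s \<noteq> \<sigma> y \<longrightarrow> (\<exists>w. {w, y} \<in> E \<and> \<sigma> w = s)"
    unfolding sees_smaller_colors_def by simp
  then obtain w where w: "{w, y} \<in> E" "\<sigma> w = \<sigma> x"
    using \<open>\<sigma> x \<in> \<sigma> ` V\<close> below by blast
  have "w \<in> V"
    using simple w(1) unfolding simple_graph_def by (metis doubleton_eq_iff fst_conv snd_conv)
  moreover have "w \<notin> A" using no_edges w(1) y by blast
  moreover have "w \<notin> B" using missing w(2) by (metis image_eqI)
  ultimately have "{w, x} \<in> E"
    using module w(1) x y unfolding is_module_def by auto
  with proper w(2) show False unfolding proper_coloring_def by auto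
qed

lemma colors_nested_if_no_edges:
  assumes proper: "proper_coloring (V, E) \<sigma>" and simple: "simple_graph (V, E)"
    and sees: "sees_smaller_colors (V, E) \<sigma> r" and total: "total_on (\<sigma> ` V) r"
    and module: "is_module (V, E) (A \<union> B)" and "A \<union> B \<subseteq> V"
    and no_edges: "\<And>a b. a \<in> A \<Longrightarrow> b \<in> B \<Longrightarrow> {a, b} \<notin> E"
  shows "\<sigma> ` A \<subseteq> \<sigma> ` B \<or> \<sigma> ` B \<subseteq> \<sigma> ` A"
proof (rule ccontr)
  assume "\<not> ?thesis"
  then obtain x y where x: "x \<in> A" "\<sigma> x \<notin> \<sigma> ` B" and y: "y \<in> B" "\<sigma> y \<notin> \<sigma> ` A"
    by auto
  have "\<sigma> x \<noteq> \<sigma> y" using x y by blast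
  moreover have "\<sigma> x \<in> \<sigma> ` V" "\<sigma> y \<in> \<sigma> ` V" using x y \<open>A \<union> B \<subseteq> V\<close> by auto
  ultimately have "(\<sigma> x, \<sigma> y) \<in> r \<or> (\<sigma> y, \<sigma> x) \<in> r"
    using total unfolding total_on_def by blast
  moreover have "is_module (V, E) (B \<union> A)" "B \<union> A \<subseteq> V"
    using module \<open>A \<union> B \<subseteq> V\<close> by (simp_all add: Un_commute)
  moreover have "{b, a} \<notin> E" if "b \<in> B" "a \<in> A" for a b
    using no_edges[OF that(2,1)] by (simp add: insert_commute)
  ultimately show False
    using sees_smaller_color_across[OF proper simple sees module \<open>A \<union> B \<subseteq> V\<close> no_edges x(1) y(1)]
      sees_smaller_color_across[OF proper simple sees, of B A y x] x y \<open>\<sigma> x \<noteq> \<sigma> y\<close> by auto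
qed

lemma hc_coloring_if_module:
  assumes proper: "proper_coloring (V, E) \<sigma>" and simple: "simple_graph (V, E)"
    and sees: "sees_smaller_colors (V, E) \<sigma> r" and total: "total_on (\<sigma> ` V) r"
  shows "cotree_ok (V, E) S \<Longrightarrow> leaves S \<subseteq> V \<Longrightarrow> is_module (V, E) (leaves S) \<Longrightarrow>
    hc_coloring S \<sigma>"
proof (induction S)
  case (Leaf x)
  show ?case by simp
next
  case (Inner b l r')
  have edge_iff: "{y, z} \<in> E \<longleftrightarrow> b" if "y \<in> leaves l" "z \<in> leaves r'" for y z
    using cotree_ok_Inner_edge_iff[OF Inner.prems(1) that] by simp
  have "hc_coloring l \<sigma>" "hc_coloring r' \<sigma>"
    using Inner is_module_children[OF Inner.prems(1,3)] by auto
  moreover have "\<sigma> ` leaves l \<inter> \<sigma> ` leaves r' = {}" if b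
    using edge_iff proper \<open>b\<close> unfolding proper_coloring_def by fastforce
  moreover have "\<sigma> ` leaves l \<subseteq> \<sigma> ` leaves r' \<or> \<sigma> ` leaves r' \<subseteq> \<sigma> ` leaves l" if "\<not> b"
    using colors_nested_if_no_edges[OF proper simple sees total] Inner.prems(2,3) edge_iff \<open>\<not> b\<close>
    by simp
  ultimately show ?case by simp
qed

theorem lemma5:
  fixes V :: "'a set" and E :: "'a set set" and T :: "'a cotree" and \<sigma> :: "'a \<Rightarrow> 'c"
  assumes "simple_graph (V, E)"
    and "cograph (V, E)"
    and "binary_cotree (V, E) T"
    and "greedy_coloring (V, E) \<sigma>"
  shows "hc_coloring T \<sigma>"
proof -
  obtain r where "linear_order_on (\<sigma> ` V) r" "sees_smaller_colors (V, E) \<sigma> r"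
    using greedy_coloring_sees_smaller_colors[OF assms(4)] by auto
  moreover have "proper_coloring (V, E) \<sigma>"
    using assms(4) unfolding greedy_coloring_def by simp
  moreover have "cotree_ok (V, E) T" "leaves T = V"
    using assms(3) unfolding binary_cotree_def by auto
  moreover have "is_module (V, E) V"
    unfolding is_module_def by simp
  ultimately show ?thesis
    using hc_coloring_if_module[OF _ assms(1)] unfolding linear_order_on_def by auto
qed

end
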